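(* Let $A$ be a metrizable abelian topological group. Then $\hat A$ is a $k$-space.
   Context: $\mathbb{T}=\mathbb{R}/\mathbb{Z}$. $\hat A$ is the group of continuous homomorphisms $A\to\mathbb{T}$ with the compact-open topology. A Hausdorff space $X$ is a $k$-space if a subset $F\subseteq X$ is closed whenever $F\cap K$ is closed in $K$ for every compact $K\subseteq X$. *)

theory Defs
  imports "HOL-Analysis.Analysis"
begin

definition topological_ab_group :: "'a::ab_group_add topology \<Rightarrow> bool" where
  "topological_ab_group X \<longleftrightarrow>
     topspace X = UNIV \<and>
     continuous_map (prod_topology X X) X (\<lambda>(x, y). x + y) \<and>
     continuous_map X X uminus"

text \<open>The circle group T = R/Z, realised (isomorphically, via t \<mapsto> exp(2 pi i t))
  as the unit circle in the complex plane with multiplication and the subspace topology.\<close>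
definition circle_top :: "complex topology" where
  "circle_top = top_of_set (sphere 0 1)"

definition characters :: "'a::ab_group_add topology \<Rightarrow> ('a \<Rightarrow> complex) set" where
  "characters X = {c. continuous_map X circle_top c \<and> (\<forall>x y. c (x + y) = c x * c y)}"

definition compact_open_topology ::
  "'a topology \<Rightarrow> 'b topology \<Rightarrow> ('a \<Rightarrow> 'b) set \<Rightarrow> ('a \<Rightarrow> 'b) topology" where
  "compact_open_topology X Y D =
     topology_generated_by {{f \<in> D. f ` K \<subseteq> U} | K U. compactin X K \<and> openin Y U}"

definition dual_group :: "'a::ab_group_add topology \<Rightarrow> ('a \<Rightarrow> complex) topology" where
  "dual_group X = compact_open_topology X circle_top (characters X)"

end

theory Submission
  imports Defs
begin

text \<open>
  For a neighbourhood V of 0 the polar of V, the set of characters with nonnegative real part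
  on V, is equicontinuous: if the real parts of f x, f (2x), ..., f (2^k x) are all nonnegative,
  then the square of the distance from f x to 1 is at most 2/2^k. Hence the polar is compact in
  the compact-open topology: it is closed in the compact product of circles, and on equicontinuous
  sets the product topology is finer than the compact-open one.

  Now let V_0, V_1, ... be a decreasing neighbourhood base at 0, let F meet every compact set in
  a closed set, and let c0 lie outside F. Say that f is within a quarter turn of c0 on a set T if
  Re (f y * cnj (c0 y)) is nonnegative for y in T; for T the whole group this forces f = c0.
  Compactness of the polars of the V_n lets us choose a finite set T and finite sets S_n in V_n
  inductively, such that no element of F is within a quarter turn of c0 on T, in the polar of
  S_0, ..., S_(n-1) and in the polar of V_n. The set K = {0} together with all the S_n is compact,
  as the S_n converge to 0. The characters that are strictly within a quarter turn of c0 on T and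
  have positive real part on K form a neighbourhood of c0, and it misses F because every character
  lies in the polar of some V_n.
\<close>

lemma first_countable_decseq_neighbourhood_base:
  assumes "first_countable X" "openin X G" "x \<in> G"
  obtains V where "\<And>n. openin X (V n)" "\<And>n. x \<in> V n" "\<And>n. V n \<subseteq> G" "decseq V"
    "\<And>U. openin X U \<Longrightarrow> x \<in> U \<Longrightarrow> \<exists>n. V n \<subseteq> U"
proof -
  have "x \<in> topspace X"
    using assms(2,3) openin_subset by blast
  then obtain \<B> where "countable \<B>" and \<B>_open: "\<And>B. B \<in> \<B> \<Longrightarrow> openin X B"
    and \<B>_base: "\<And>U. openin X U \<Longrightarrow> x \<in> U \<Longrightarrow> \<exists>B\<in>\<B>. x \<in> B \<and> B \<subseteq> U"
    using assms(1) unfolding first_countable_def by meson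
  define \<B>' where "\<B>' = {B \<in> \<B>. x \<in> B}"
  have "countable \<B>'"
    using \<open>countable \<B>\<close> by (simp add: \<B>'_def)
  have "\<B>' \<noteq> {}"
    using \<B>_base[OF assms(2,3)] by (auto simp: \<B>'_def)
  define b where "b = from_nat_into \<B>'"
  have b: "openin X (b i) \<and> x \<in> b i" for i
    using from_nat_into[OF \<open>\<B>' \<noteq> {}\<close>] \<B>_open by (auto simp: b_def \<B>'_def)
  show ?thesis
  proof
    show "openin X (G \<inter> (\<Inter>i\<le>n. b i))" for n
      using b assms(2) by (intro openin_Int openin_INT2) auto
    show "x \<in> G \<inter> (\<Inter>i\<le>n. b i)" for n
      using b assms(3) by blast
    show "G \<inter> (\<Inter>i\<le>n. b i) \<subseteq> G" for n
      by blast
    show "decseq (\<lambda>n. G \<inter> (\<Inter>i\<le>n. b i))"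
      by (auto simp: decseq_def)
    fix U assume "openin X U" "x \<in> U"
    then obtain B where "B \<in> \<B>'" "B \<subseteq> U"
      using \<B>_base by (auto simp: \<B>'_def)
    then obtain i where "b i = B"
      using from_nat_into_surj[OF \<open>countable \<B>'\<close>] by (auto simp: b_def)
    then show "\<exists>n. G \<inter> (\<Inter>i\<le>n. b i) \<subseteq> U"
      using \<open>B \<subseteq> U\<close> by blast
  qed
qed

lemma compactin_insert_UN_converging:
  assumes "a \<in> topspace X" "\<And>n. finite (S n)" "\<And>n. S n \<subseteq> topspace X" "\<And>n. S n \<subseteq> V n"
    and "decseq V" "\<And>U. openin X U \<Longrightarrow> a \<in> U \<Longrightarrow> \<exists>n. V n \<subseteq> U"
  shows "compactin X (insert a (\<Union>n. S n))" (is "compactin X ?K")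
  unfolding compactin_def
proof (intro conjI allI impI)
  show "?K \<subseteq> topspace X"
    using assms(1,3) by blast
  fix \<U> assume "(\<forall>U\<in>\<U>. openin X U) \<and> ?K \<subseteq> \<Union>\<U>"
  then have \<U>_open: "\<And>U. U \<in> \<U> \<Longrightarrow> openin X U" and \<U>_cover: "?K \<subseteq> \<Union>\<U>"
    by auto
  then obtain U0 where "U0 \<in> \<U>" "a \<in> U0"
    by auto
  then obtain N where "V N \<subseteq> U0"
    using assms(6) \<U>_open by meson
  have "S n \<subseteq> U0" if "N \<le> n" for n
  proof -
    have "V n \<subseteq> V N"
      using \<open>decseq V\<close> that by (rule decseqD)
    then show ?thesis
      using assms(4)[of n] \<open>V N \<subseteq> U0\<close> by blast
  qed
  then have "?K - U0 \<subseteq> (\<Union>n<N. S n)"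
    using \<open>a \<in> U0\<close> by (force simp: not_le[symmetric])
  then have "finite (?K - U0)"
    by (rule finite_subset) (simp add: assms(2))
  have "\<forall>y \<in> ?K - U0. \<exists>U\<in>\<U>. y \<in> U"
    using \<U>_cover by auto
  then obtain g where g: "\<And>y. y \<in> ?K - U0 \<Longrightarrow> g y \<in> \<U> \<and> y \<in> g y"
    by metis
  show "\<exists>\<F>. finite \<F> \<and> \<F> \<subseteq> \<U> \<and> ?K \<subseteq> \<Union>\<F>"
  proof (intro exI conjI)
    show "finite (insert U0 (g ` (?K - U0)))"
      using \<open>finite (?K - U0)\<close> by simp
    show "insert U0 (g ` (?K - U0)) \<subseteq> \<U>"
      using \<open>U0 \<in> \<U>\<close> g by auto
    show "?K \<subseteq> \<Union>(insert U0 (g ` (?K - U0)))"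
    proof
      fix y assume "y \<in> ?K"
      then show "y \<in> \<Union>(insert U0 (g ` (?K - U0)))"
        using g[of y] by (cases "y \<in> U0") auto
    qed
  qed
qed

lemma compactin_Inter_closedin_eq_empty_finite:
  assumes "compactin X Q" "\<And>y. y \<in> Y \<Longrightarrow> closedin X (G y)" "Q \<inter> (\<Inter>y\<in>Y. G y) = {}"
  obtains S where "finite S" "S \<subseteq> Y" "Q \<inter> (\<Inter>y\<in>S. G y) = {}"
proof -
  have "\<exists>\<F>. finite \<F> \<and> \<F> \<subseteq> G ` Y \<and> Q \<inter> \<Inter>\<F> = {}"
    using assms unfolding compactin_fip by blast
  then show ?thesis
    using that by (metis finite_subset_image)
qed

lemma compactin_pointwise_finite_subcover:
  assumes "compactin X K" "\<And>x. x \<in> K \<Longrightarrow> openin X (W x) \<and> x \<in> W x"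
  obtains K0 where "finite K0" "K0 \<subseteq> K" "K \<subseteq> (\<Union>x\<in>K0. W x)"
proof -
  have "(\<forall>V\<in>W ` K. openin X V) \<and> K \<subseteq> \<Union>(W ` K)"
    using assms(2) by blast
  then obtain \<F> where "finite \<F>" "\<F> \<subseteq> W ` K" "K \<subseteq> \<Union>\<F>"
    using assms(1) unfolding compactin_def by meson
  then show ?thesis
    using that by (metis finite_subset_image)
qed

lemma openin_image_subset_if_equicontinuous:
  fixes H :: "('a \<Rightarrow> 'b::metric_space) set"
  assumes equicont: "\<And>x e. x \<in> topspace X \<Longrightarrow> 0 < e \<Longrightarrow>
      \<exists>W. openin X W \<and> x \<in> W \<and> (\<forall>g\<in>H. \<forall>z\<in>W. dist (g z) (g x) < e)"
    and K: "compactin X K" and U: "open U"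
  shows "openin (top_of_set H) {g \<in> H. g ` K \<subseteq> U}"
  unfolding openin_subopen[of _ "{g \<in> H. g ` K \<subseteq> U}"]
proof
  fix f assume f: "f \<in> {g \<in> H. g ` K \<subseteq> U}"
  have "\<forall>x\<in>K. \<exists>r>0. ball (f x) r \<subseteq> U"
    using f U open_contains_ball by blast
  then obtain e where e: "\<And>x. x \<in> K \<Longrightarrow> 0 < e x \<and> ball (f x) (e x) \<subseteq> U"
    by metis
  have "\<forall>x\<in>K. \<exists>W. openin X W \<and> x \<in> W \<and> (\<forall>g\<in>H. \<forall>z\<in>W. dist (g z) (g x) < e x / 2)"
    using e compactin_subset_topspace[OF K] by (intro ballI equicont) auto
  then obtain W where W: "\<And>x. x \<in> K \<Longrightarrow> openin X (W x) \<and> x \<in> W x \<and>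
      (\<forall>g\<in>H. \<forall>z\<in>W x. dist (g z) (g x) < e x / 2)"
    by metis
  obtain K0 where K0: "finite K0" "K0 \<subseteq> K" "K \<subseteq> (\<Union>x\<in>K0. W x)"
    using compactin_pointwise_finite_subcover[OF K] W by metis
  define N where "N = (\<Inter>x\<in>K0. {g. dist (g x) (f x) < e x / 2})"
  have "open {g. dist (g x) (f x) < e x / 2}" for x :: 'a
    by (intro open_Collect_less continuous_on_dist continuous_on_const continuous_on_product_coordinates)
  then have "open N"
    unfolding N_def using K0(1) by blast
  moreover have "f \<in> N"
    using K0(2) e by (auto simp: N_def)
  moreover have "g z \<in> U" if "g \<in> H" "g \<in> N" "z \<in> K" for g z
  proof -
    obtain x where x: "x \<in> K0" "z \<in> W x"
      using K0(3) \<open>z \<in> K\<close> by blast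
    have "dist (g z) (f x) \<le> dist (g z) (g x) + dist (g x) (f x)"
      by (rule dist_triangle)
    also have "\<dots> < e x / 2 + e x / 2"
    proof (rule add_strict_mono)
      show "dist (g z) (g x) < e x / 2"
        using W[of x] x K0(2) \<open>g \<in> H\<close> by blast
      show "dist (g x) (f x) < e x / 2"
        using x(1) \<open>g \<in> N\<close> by (simp add: N_def)
    qed
    finally have "g z \<in> ball (f x) (e x)"
      by (simp add: dist_commute)
    then show "g z \<in> U"
      using e[of x] x K0(2) by blast
  qed
  ultimately show "\<exists>T. openin (top_of_set H) T \<and> f \<in> T \<and> T \<subseteq> {g \<in> H. g ` K \<subseteq> U}"
    using f by (intro exI[of _ "H \<inter> N"]) (auto simp: openin_open_Int)
qed

section \<open>Homomorphisms into the circle\<close>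

definition circle_hom :: "('a::ab_group_add \<Rightarrow> complex) \<Rightarrow> bool" where
  "circle_hom f \<longleftrightarrow> (\<forall>x y. f (x + y) = f x * f y) \<and> (\<forall>x. cmod (f x) = 1)"

lemma circle_hom_zero: "circle_hom f \<Longrightarrow> f 0 = 1"
  unfolding circle_hom_def by (metis add_0 mult_cancel_right2 norm_zero zero_neq_one)

lemma cmod_eq_1_mult_cnj: "cmod z = 1 \<Longrightarrow> z * cnj z = 1"
  by (simp add: complex_mult_cnj cmod_def)

lemma circle_hom_mult_cnj:
  assumes "circle_hom f" "circle_hom g"
  shows "circle_hom (\<lambda>x. f x * cnj (g x))"
  using assms unfolding circle_hom_def by (simp add: norm_mult)

lemma circle_hom_dist:
  assumes "circle_hom f" shows "dist (f z) (f a) = cmod (f (z - a) - 1)"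
proof -
  have "f z = f (z - a) * f a"
    using assms unfolding circle_hom_def by (metis diff_add_cancel)
  then have "f z - f a = (f (z - a) - 1) * f a"
    by (simp add: algebra_simps)
  then show ?thesis
    using assms by (simp add: circle_hom_def dist_norm norm_mult)
qed

definition doubling :: "nat \<Rightarrow> 'a::ab_group_add \<Rightarrow> 'a" where
  "doubling j = (\<lambda>y. y + y) ^^ j"

lemma doubling_zero [simp]: "doubling j 0 = 0"
  by (induction j) (simp_all add: doubling_def)

lemma circle_hom_doubling: "circle_hom f \<Longrightarrow> f (doubling j x) = f x ^ 2 ^ j"
  by (induction j) (simp_all add: doubling_def circle_hom_def mult_2 power_add)

lemma cmod_minus_one_squared:
  assumes "cmod w = 1" shows "(cmod (w - 1))\<^sup>2 = 2 - 2 * Re w"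
proof -
  have "(Re w)\<^sup>2 + (Im w)\<^sup>2 = 1"
    using assms by (metis cmod_power2 power_one)
  moreover have "(cmod (w - 1))\<^sup>2 = (Re w - 1)\<^sup>2 + (Im w)\<^sup>2"
    by (simp add: cmod_power2)
  ultimately show ?thesis
    by (simp add: power2_eq_square algebra_simps)
qed

lemma circle_Re_doubling_bound:
  assumes "cmod w = 1" "\<And>j. j \<le> k \<Longrightarrow> 0 \<le> Re (w ^ 2 ^ j)"
  shows "1 - Re w \<le> 1 / 2 ^ k"
  using assms
proof (induction k arbitrary: w)
  case 0
  then show ?case by simp
next
  case (Suc k)
  have "1 - Re (w\<^sup>2) \<le> 1 / 2 ^ k"
  proof (rule Suc.IH)
    show "cmod (w\<^sup>2) = 1"
      using Suc.prems(1) by (simp add: norm_power)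
    show "0 \<le> Re ((w\<^sup>2) ^ 2 ^ j)" if "j \<le> k" for j
      using Suc.prems(2)[of "Suc j"] that by (simp add: power_mult[symmetric])
  qed
  moreover have "1 - Re (w\<^sup>2) = 2 * (1 - Re w) * (1 + Re w)"
    using Suc.prems(1) cmod_minus_one_squared[of w] cmod_power2[of w]
    by (simp add: power2_eq_square algebra_simps)
  moreover have "0 \<le> Re w" "Re w \<le> 1"
    using Suc.prems(2)[of 0] Suc.prems(1) complex_Re_le_cmod[of w] by auto
  then have "2 * (1 - Re w) * 1 \<le> 2 * (1 - Re w) * (1 + Re w)"
    by (intro mult_left_mono) auto
  ultimately have "2 * (1 - Re w) \<le> 1 / 2 ^ k"
    by linarith
  then show ?case
    by (simp add: field_simps)
qed

lemma circle_hom_near_one: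
  assumes "circle_hom f" "\<And>j. j \<le> k \<Longrightarrow> 0 \<le> Re (f (doubling j x))"
  shows "(cmod (f x - 1))\<^sup>2 \<le> 2 / 2 ^ k"
proof -
  have "cmod (f x) = 1"
    using assms(1) by (simp add: circle_hom_def)
  moreover have "1 - Re (f x) \<le> 1 / 2 ^ k"
    using circle_Re_doubling_bound[OF calculation] assms circle_hom_doubling by metis
  ultimately show ?thesis
    by (simp add: cmod_minus_one_squared)
qed

lemma exists_two_div_pow_less: "0 < (e::real) \<Longrightarrow> \<exists>k. 2 / 2 ^ k < e"
  using real_arch_pow_inv[of "e / 2" "1 / 2"] by (auto simp: power_one_over field_simps)

lemma circle_hom_eq_1_if_Re_nonneg:
  assumes "circle_hom f" "\<And>y. 0 \<le> Re (f y)"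
  shows "f y = 1"
proof (rule ccontr)
  assume "f y \<noteq> 1"
  then obtain k where "2 / 2 ^ k < (cmod (f y - 1))\<^sup>2"
    using exists_two_div_pow_less by force
  moreover have "(cmod (f y - 1))\<^sup>2 \<le> 2 / 2 ^ k"
    using circle_hom_near_one assms by blast
  ultimately show False by linarith
qed

lemma circle_hom_eqI:
  assumes "circle_hom f" "circle_hom g" "\<And>y. 0 \<le> Re (f y * cnj (g y))"
  shows "f = g"
proof
  fix y
  have "f y * cnj (g y) = 1"
    using circle_hom_eq_1_if_Re_nonneg[OF circle_hom_mult_cnj[OF assms(1,2)]] assms(3) .
  then have "f y * (cnj (g y) * g y) = g y"
    by (metis mult.assoc mult_1)
  moreover have "cnj (g y) * g y = 1"
    using assms(2) cmod_eq_1_mult_cnj by (metis circle_hom_def mult.commute)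
  ultimately show "f y = g y"
    by simp
qed

lemma compact_circle_hom_polar:
  "compact {f :: 'a::ab_group_add \<Rightarrow> complex. circle_hom f \<and> (\<forall>y\<in>V. 0 \<le> Re (f y))}"
    (is "compact ?H")
proof -
  have H_eq: "?H = {f. \<forall>x y. f (x + y) = f x * f y} \<inter> {f. \<forall>x. norm (f x) = 1}
      \<inter> {f. \<forall>y. y \<in> V \<longrightarrow> 0 \<le> Re (f y)}"
    by (auto simp: circle_hom_def)
  have "closed {f::'a \<Rightarrow> complex. \<forall>x y. f (x + y) = f x * f y}"
    by (intro closed_Collect_all closed_Collect_eq continuous_on_mult continuous_on_product_coordinates)
  moreover have "closed {f::'a \<Rightarrow> complex. \<forall>x. norm (f x) = 1}"
    by (intro closed_Collect_all closed_Collect_eq continuous_on_norm continuous_on_const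
        continuous_on_product_coordinates)
  moreover have "closed {f::'a \<Rightarrow> complex. \<forall>y. y \<in> V \<longrightarrow> 0 \<le> Re (f y)}"
    by (intro closed_Collect_all closed_Collect_imp closed_Collect_le continuous_on_Re continuous_on_const
        continuous_on_product_coordinates) auto
  ultimately have "closed ?H"
    unfolding H_eq by (intro closed_Int)
  have "compact (Pi\<^sub>E UNIV (\<lambda>_. sphere (0::complex) 1))"
    using compactin_PiE[of "\<lambda>_. euclidean" UNIV "\<lambda>_. sphere (0::complex) 1"]
    by (simp add: euclidean_product_topology)
  then have "compact (Pi\<^sub>E UNIV (\<lambda>_. sphere 0 1) \<inter> ?H)"
    using \<open>closed ?H\<close> by (rule compact_Int_closed)
  moreover have "?H \<subseteq> Pi\<^sub>E UNIV (\<lambda>_. sphere 0 1)"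
    by (auto simp: circle_hom_def PiE_def)
  ultimately show ?thesis
    by (simp add: Int_absorb1)
qed

section \<open>Equicontinuity of polars\<close>

lemma topspace_topological_ab_group: "topological_ab_group X \<Longrightarrow> topspace X = UNIV"
  by (simp add: topological_ab_group_def)

lemma continuous_map_add_topological_ab_group:
  assumes "topological_ab_group X" "continuous_map Y X f" "continuous_map Y X g"
  shows "continuous_map Y X (\<lambda>y. f y + g y)"
proof -
  have "continuous_map Y X ((\<lambda>(x, y). x + y) \<circ> (\<lambda>y. (f y, g y)))"
    using assms unfolding topological_ab_group_def
    by (intro continuous_map_compose[where X' = "prod_topology X X"] continuous_map_pairedI) auto
  then show ?thesis
    by (simp add: o_def)
qed

lemma openin_translate:
  assumes "topological_ab_group X" "openin X U"
  shows "openin X {y. y - a \<in> U}"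
proof -
  have "continuous_map X X (\<lambda>y. y + - a)"
    using assms(1) by (intro continuous_map_add_topological_ab_group)
      (auto simp: topspace_topological_ab_group)
  from openin_continuous_map_preimage[OF this assms(2)] show ?thesis
    using assms(1) by (simp add: topspace_topological_ab_group)
qed

lemma continuous_map_doubling:
  assumes "topological_ab_group X"
  shows "continuous_map X X (doubling j)"
proof (induction j)
  case 0
  then show ?case by (simp add: doubling_def)
next
  case (Suc j)
  then show ?case
    using continuous_map_add_topological_ab_group[OF assms Suc Suc] by (simp add: doubling_def)
qed

lemma polar_equicontinuous_at:
  assumes "topological_ab_group X" "openin X V" "0 \<in> V" "0 < e"
  obtains W where "openin X W" "x \<in> W"
    "\<And>f z. circle_hom f \<Longrightarrow> \<forall>y\<in>V. 0 \<le> Re (f y) \<Longrightarrow> z \<in> W \<Longrightarrow> dist (f z) (f x) < e"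
proof -
  obtain k where k: "2 / 2 ^ k < e\<^sup>2"
    using exists_two_div_pow_less assms(4) by (meson zero_less_power)
  define W0 where "W0 = {y. \<forall>j\<le>k. doubling j y \<in> V}"
  have "W0 = (\<Inter>j\<in>{..k}. {y \<in> topspace X. doubling j y \<in> V})"
    using assms(1) by (auto simp: W0_def topspace_topological_ab_group)
  then have "openin X W0"
    using continuous_map_doubling[OF assms(1)] assms(2)
    by (auto intro!: openin_INT2 openin_continuous_map_preimage)
  show ?thesis
  proof (rule that)
    show "openin X {z. z - x \<in> W0}"
      by (rule openin_translate[OF assms(1) \<open>openin X W0\<close>])
    show "x \<in> {z. z - x \<in> W0}"
      using assms(3) by (simp add: W0_def)
    fix f z
    assume f: "circle_hom f" "\<forall>y\<in>V. 0 \<le> Re (f y)" and "z \<in> {z. z - x \<in> W0}"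
    then have "(cmod (f (z - x) - 1))\<^sup>2 \<le> 2 / 2 ^ k"
      by (intro circle_hom_near_one) (auto simp: W0_def)
    then have "(dist (f z) (f x))\<^sup>2 < e\<^sup>2"
      using k circle_hom_dist[OF f(1)] by simp
    then show "dist (f z) (f x) < e"
      using assms(4) by (simp add: power_less_imp_less_base)
  qed
qed

lemma continuous_map_circle_hom:
  assumes "topological_ab_group X" "openin X V" "0 \<in> V"
    and "circle_hom f" "\<forall>y\<in>V. 0 \<le> Re (f y)"
  shows "continuous_map X euclidean f"
  unfolding Met_TC.continuous_map_to_metric[simplified]
  by (metis assms polar_equicontinuous_at dist_commute)

section \<open>The dual group\<close>

lemma characters_imp_circle_hom:
  assumes "topological_ab_group X" "c \<in> characters X"
  shows "circle_hom c"
proof -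
  have "c x \<in> sphere 0 1" for x
    using assms continuous_map_image_subset_topspace[of X circle_top c]
    by (auto simp: characters_def circle_top_def topspace_topological_ab_group image_subset_iff)
  then show ?thesis
    using assms(2) by (simp add: characters_def circle_hom_def)
qed

lemma continuous_map_character: "c \<in> characters X \<Longrightarrow> continuous_map X euclidean c"
  by (simp add: characters_def circle_top_def continuous_map_in_subtopology)

lemma circle_hom_in_characters:
  assumes "continuous_map X euclidean c" "circle_hom c"
  shows "c \<in> characters X"
  using assms
  by (simp add: characters_def circle_top_def circle_hom_def continuous_map_in_subtopology image_subset_iff)

lemma topspace_dual_group: "topspace (dual_group X) = characters X"
proof -
  have "characters X \<in> {{f \<in> characters X. f ` K \<subseteq> U} | K U. compactin X K \<and> openin circle_top U}"
    by (auto intro!: exI[of _ "{}"] exI[of _ "sphere 0 1"] simp: circle_top_def)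
  then show ?thesis
    unfolding dual_group_def compact_open_topology_def topology_generated_by_topspace by blast
qed

lemma openin_dual_group_subbasic:
  assumes "compactin X K" "openin circle_top U"
  shows "openin (dual_group X) {f \<in> characters X. f ` K \<subseteq> U}"
  unfolding dual_group_def compact_open_topology_def
  by (rule topology_generated_by_Basis) (use assms in blast)

lemma openin_dual_group_eval:
  assumes "topological_ab_group X" "open U"
  shows "openin (dual_group X) {f \<in> characters X. f y \<in> U}"
proof -
  have "openin (dual_group X) {f \<in> characters X. f ` {y} \<subseteq> sphere 0 1 \<inter> U}"
    using assms by (intro openin_dual_group_subbasic)
      (auto simp: circle_top_def topspace_topological_ab_group)
  moreover have "{f \<in> characters X. f ` {y} \<subseteq> sphere 0 1 \<inter> U} = {f \<in> characters X. f y \<in> U}"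
    using characters_imp_circle_hom[OF assms(1)] by (auto simp: circle_hom_def)
  ultimately show ?thesis
    by simp
qed

lemma Hausdorff_space_dual_group:
  assumes "topological_ab_group X"
  shows "Hausdorff_space (dual_group X)"
  unfolding Hausdorff_space_def topspace_dual_group
proof (intro allI impI, elim conjE)
  fix f g assume "f \<in> characters X" "g \<in> characters X" "f \<noteq> g"
  then obtain y where "f y \<noteq> g y"
    by blast
  then obtain U V where "open U" "open V" "f y \<in> U" "g y \<in> V" "disjnt U V"
    by (metis separation_t2 disjnt_def)
  then show "\<exists>U V. openin (dual_group X) U \<and> openin (dual_group X) V \<and> f \<in> U \<and> g \<in> V \<and> disjnt U V"
    using \<open>f \<in> characters X\<close> \<open>g \<in> characters X\<close>
    by (intro exI[of _ "{h \<in> characters X. h y \<in> U}"] exI[of _ "{h \<in> characters X. h y \<in> V}"])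
      (auto simp: openin_dual_group_eval[OF assms] disjnt_def)
qed

definition polar_around ::
    "'a::ab_group_add topology \<Rightarrow> ('a \<Rightarrow> complex) \<Rightarrow> 'a set \<Rightarrow> ('a \<Rightarrow> complex) set" where
  "polar_around X c S = {f \<in> characters X. \<forall>y\<in>S. 0 \<le> Re (f y * cnj (c y))}"

abbreviation polar :: "'a::ab_group_add topology \<Rightarrow> 'a set \<Rightarrow> ('a \<Rightarrow> complex) set" where
  "polar X S \<equiv> polar_around X (\<lambda>_. 1) S"

lemma polar_around_Un: "polar_around X c (A \<union> B) = polar_around X c A \<inter> polar_around X c B"
  by (auto simp: polar_around_def)

lemma polar_around_eq_Inter: "polar_around X c S = characters X \<inter> (\<Inter>y\<in>S. polar_around X c {y})"
  by (auto simp: polar_around_def)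

lemma polar_around_UNIV:
  assumes "topological_ab_group X" "c \<in> characters X"
  shows "polar_around X c UNIV = {c}"
proof -
  have "Re (c y * cnj (c y)) = 1" for y
    using characters_imp_circle_hom[OF assms] cmod_eq_1_mult_cnj by (simp add: circle_hom_def)
  moreover have "f = c" if "f \<in> polar_around X c UNIV" for f
    using that assms characters_imp_circle_hom[OF assms(1)]
    by (intro circle_hom_eqI) (auto simp: polar_around_def)
  ultimately show ?thesis
    using assms(2) by (auto simp: polar_around_def)
qed

lemma closedin_polar_around:
  assumes "topological_ab_group X"
  shows "closedin (dual_group X) (polar_around X c S)"
proof -
  have "open {z. Re (z * cnj (c y)) < 0}" for y
    by (intro open_Collect_less continuous_intros)
  then have "openin (dual_group X) (\<Union>y\<in>S. {f \<in> characters X. f y \<in> {z. Re (z * cnj (c y)) < 0}})"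
    using openin_dual_group_eval[OF assms] by blast
  moreover have "(\<Union>y\<in>S. {f \<in> characters X. f y \<in> {z. Re (z * cnj (c y)) < 0}})
      = topspace (dual_group X) - polar_around X c S"
    by (auto simp: topspace_dual_group polar_around_def)
  ultimately show ?thesis
    by (simp add: closedin_def topspace_dual_group polar_around_def)
qed

lemma polar_eq_circle_hom_polar:
  assumes tg: "topological_ab_group X" and V: "openin X V" "0 \<in> V"
  shows "polar X V = {f. circle_hom f \<and> (\<forall>y\<in>V. 0 \<le> Re (f y))}"
proof (intro equalityI subsetI)
  fix f assume "f \<in> polar X V"
  then show "f \<in> {f. circle_hom f \<and> (\<forall>y\<in>V. 0 \<le> Re (f y))}"
    using characters_imp_circle_hom[OF tg] by (simp add: polar_around_def)
next
  fix f assume f: "f \<in> {f. circle_hom f \<and> (\<forall>y\<in>V. 0 \<le> Re (f y))}"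
  then have "f \<in> characters X"
    using circle_hom_in_characters[OF continuous_map_circle_hom[OF tg V]] by simp
  then show "f \<in> polar X V"
    using f by (simp add: polar_around_def)
qed

lemma continuous_map_polar_dual_group:
  assumes tg: "topological_ab_group X" and V: "openin X V" "0 \<in> V"
  shows "continuous_map (top_of_set (polar X V)) (dual_group X) id"
  unfolding dual_group_def compact_open_topology_def
proof (rule continuous_on_generated_topo)
  fix U assume "U \<in> {{f \<in> characters X. f ` K \<subseteq> U} | K U. compactin X K \<and> openin circle_top U}"
  then obtain K Uc where U: "U = {f \<in> characters X. f ` K \<subseteq> Uc}" "compactin X K"
      "openin circle_top Uc"
    by blast
  then obtain G where G: "open G" "Uc = sphere 0 1 \<inter> G"
    by (auto simp: circle_top_def openin_open)
  have "id -` U \<inter> topspace (top_of_set (polar X V)) = {g \<in> polar X V. g ` K \<subseteq> G}"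
    using U(1) G(2) characters_imp_circle_hom[OF tg]
    by (auto simp: circle_hom_def polar_around_def)
  moreover have "openin (top_of_set (polar X V)) {g \<in> polar X V. g ` K \<subseteq> G}"
  proof (rule openin_image_subset_if_equicontinuous[OF _ U(2) G(1)])
    fix x and e :: real assume "0 < e"
    then obtain W where "openin X W" "x \<in> W"
      "\<And>f z. circle_hom f \<Longrightarrow> \<forall>y\<in>V. 0 \<le> Re (f y) \<Longrightarrow> z \<in> W \<Longrightarrow> dist (f z) (f x) < e"
      using polar_equicontinuous_at[OF tg V] by blast
    then show "\<exists>W. openin X W \<and> x \<in> W \<and> (\<forall>g\<in>polar X V. \<forall>z\<in>W. dist (g z) (g x) < e)"
      unfolding polar_eq_circle_hom_polar[OF tg V] by blast
  qed
  ultimately show "openin (top_of_set (polar X V)) (id -` U \<inter> topspace (top_of_set (polar X V)))"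
    by simp
next
  show "id ` topspace (top_of_set (polar X V))
      \<subseteq> \<Union>{{f \<in> characters X. f ` K \<subseteq> U} | K U. compactin X K \<and> openin circle_top U}"
    using topspace_dual_group[of X]
    unfolding dual_group_def compact_open_topology_def topology_generated_by_topspace
    by (auto simp: polar_around_def)
qed

lemma compactin_polar:
  assumes tg: "topological_ab_group X" and V: "openin X V" "0 \<in> V"
  shows "compactin (dual_group X) (polar X V)"
proof -
  have "compactin (top_of_set (polar X V)) (polar X V)"
    using compact_circle_hom_polar polar_eq_circle_hom_polar[OF tg V]
    by (simp add: compactin_subtopology compactin_euclidean_iff)
  from image_compactin[OF this continuous_map_polar_dual_group[OF tg V]] show ?thesis
    by simp
qed

lemma polar_around_finite_disjoint:
  assumes "topological_ab_group X" "compactin (dual_group X) Q" "Q \<inter> polar_around X c V = {}"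
  obtains S where "finite S" "S \<subseteq> V" "Q \<inter> polar_around X c S = {}"
proof -
  have "Q \<subseteq> characters X"
    using compactin_subset_topspace[OF assms(2)] by (simp add: topspace_dual_group)
  then have eq: "Q \<inter> polar_around X c S = Q \<inter> (\<Inter>y\<in>S. polar_around X c {y})" for S
    using polar_around_eq_Inter[of X c S] by blast
  have "Q \<inter> (\<Inter>y\<in>V. polar_around X c {y}) = {}"
    using assms(3) eq[of V] by simp
  then obtain S where "finite S" "S \<subseteq> V" "Q \<inter> (\<Inter>y\<in>S. polar_around X c {y}) = {}"
    by (rule compactin_Inter_closedin_eq_empty_finite[OF assms(2) closedin_polar_around[OF assms(1)]])
  then show ?thesis
    using that eq by presburger
qed

lemma polar_chain_step:
  assumes tg: "topological_ab_group X"
    and "compactin (dual_group X) (polar X V' \<inter> F)" "closedin (dual_group X) (polar X V' \<inter> F)"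
    and "closedin (dual_group X) Z" "Z \<inter> polar X V \<inter> F = {}"
  obtains S where "finite S" "S \<subseteq> V" "Z \<inter> polar X S \<inter> polar X V' \<inter> F = {}"
proof -
  have "closedin (dual_group X) (Z \<inter> (polar X V' \<inter> F))"
    using assms(4,3) by (rule closedin_Int)
  then have "compactin (dual_group X) (Z \<inter> (polar X V' \<inter> F))"
    by (rule closed_compactin[OF assms(2) Int_lower2])
  moreover have "Z \<inter> (polar X V' \<inter> F) \<inter> polar X V = {}"
    using assms(5) by blast
  ultimately obtain S where "finite S" "S \<subseteq> V" "Z \<inter> (polar X V' \<inter> F) \<inter> polar X S = {}"
    by (rule polar_around_finite_disjoint[OF tg])
  then show ?thesis
    using that by blast
qed

lemma polar_chain_exists:
  fixes V :: "nat \<Rightarrow> 'a::ab_group_add set"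
  assumes tg: "topological_ab_group X"
    and PF: "\<And>n. compactin (dual_group X) (polar X (V n) \<inter> F)"
      "\<And>n. closedin (dual_group X) (polar X (V n) \<inter> F)"
    and Z: "closedin (dual_group X) Z" "Z \<inter> polar X (V 0) \<inter> F = {}"
  obtains S where "\<And>n. finite (S n)" "\<And>n. S n \<subseteq> V n"
    "\<And>n. Z \<inter> polar X (\<Union>k<n. S k) \<inter> polar X (V n) \<inter> F = {}"
proof -
  define P where "P n T \<longleftrightarrow> finite T \<and> Z \<inter> polar X T \<inter> polar X (V n) \<inter> F = {} \<and> (n = 0 \<longrightarrow> T = {})"
    for n :: nat and T
  define R where "R n T T' \<longleftrightarrow> (\<exists>S. finite S \<and> S \<subseteq> V n \<and> T' = T \<union> S)" for n :: nat and T T'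
  have "\<exists>T'. P (Suc n) T' \<and> R n T T'" if "P n T" for n :: nat and T
  proof -
    have "closedin (dual_group X) (Z \<inter> polar X T)"
      using Z(1) closedin_polar_around[OF tg] by (rule closedin_Int)
    moreover have "Z \<inter> polar X T \<inter> polar X (V n) \<inter> F = {}"
      using that by (simp add: P_def)
    ultimately obtain S where "finite S" "S \<subseteq> V n"
      "Z \<inter> polar X T \<inter> polar X S \<inter> polar X (V (Suc n)) \<inter> F = {}"
      by (rule polar_chain_step[OF tg PF])
    then have "P (Suc n) (T \<union> S) \<and> R n T (T \<union> S)"
      using that by (auto simp: P_def R_def polar_around_Un Int_assoc)
    then show ?thesis ..
  qed
  moreover have "P 0 {}"
    using Z(2) by (auto simp: P_def)
  ultimately obtain T where T: "\<And>n. P n (T n) \<and> R n (T n) (T (Suc n))"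
    using dependent_nat_choice[of P R] by blast
  then obtain S where S: "\<And>n. finite (S n) \<and> S n \<subseteq> V n \<and> T (Suc n) = T n \<union> S n"
    unfolding R_def by metis
  have "T 0 = {}"
    using T[of 0] by (simp add: P_def)
  have T_eq: "T n = (\<Union>k<n. S k)" for n
    by (induction n) (simp_all add: \<open>T 0 = {}\<close> S lessThan_Suc Un_commute)
  show ?thesis
  proof (rule that)
    show "finite (S n)" "S n \<subseteq> V n" for n
      using S by auto
    show "Z \<inter> polar X (\<Union>k<n. S k) \<inter> polar X (V n) \<inter> F = {}" for n
      using T[of n] by (simp add: P_def T_eq)
  qed
qed

lemma openin_dual_group_strict_polar_around:
  assumes "topological_ab_group X" "finite S"
  shows "openin (dual_group X) {f \<in> characters X. \<forall>y\<in>S. 0 < Re (f y * cnj (c y))}"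
proof -
  have "open {z. 0 < Re (z * cnj (c y))}" for y
    by (intro open_Collect_less continuous_intros)
  then have "openin (dual_group X)
      ((\<Inter>y\<in>S. {f \<in> characters X. f y \<in> {z. 0 < Re (z * cnj (c y))}}) \<inter> topspace (dual_group X))"
    by (intro openin_INT[OF assms(2)] openin_dual_group_eval[OF assms(1)])
  moreover have "(\<Inter>y\<in>S. {f \<in> characters X. f y \<in> {z. 0 < Re (z * cnj (c y))}}) \<inter> topspace (dual_group X)
      = {f \<in> characters X. \<forall>y\<in>S. 0 < Re (f y * cnj (c y))}"
    by (auto simp: topspace_dual_group)
  ultimately show ?thesis
    by simp
qed

lemma openin_dual_group_strict_polar:
  assumes "compactin X K"
  shows "openin (dual_group X) {f \<in> characters X. \<forall>y\<in>K. 0 < Re (f y)}"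
proof -
  have "openin circle_top (sphere 0 1 \<inter> {z. 0 < Re z})"
    unfolding circle_top_def by (intro openin_open_Int open_Collect_less continuous_intros)
  then have "openin (dual_group X) {f \<in> characters X. f ` K \<subseteq> sphere 0 1 \<inter> {z. 0 < Re z}}"
    using assms by (rule openin_dual_group_subbasic[rotated])
  moreover have "f ` K \<subseteq> sphere 0 1" if "f \<in> characters X" for f
    using that compactin_subset_topspace[OF assms] continuous_map_image_subset_topspace[of X circle_top f]
    by (auto simp: characters_def circle_top_def)
  ultimately show ?thesis
    by (auto elim!: back_subst[of "openin (dual_group X)"])
qed

lemma openin_character_Re_pos:
  assumes "c \<in> characters X"
  shows "openin X {y \<in> topspace X. 0 < Re (c y)}"
proof -
  have "open {z. 0 < Re z}"
    by (intro open_Collect_less continuous_intros)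
  then show ?thesis
    using openin_continuous_map_preimage[OF continuous_map_character[OF assms], of "{z. 0 < Re z}"]
    by simp
qed

lemma character_in_polar_of_neighbourhood_base:
  assumes "topological_ab_group X" "c \<in> characters X"
    and "\<And>U. openin X U \<Longrightarrow> 0 \<in> U \<Longrightarrow> \<exists>n. V n \<subseteq> U"
  obtains n where "c \<in> polar X (V n)"
proof -
  have "0 < Re (c 0)"
    using circle_hom_zero[OF characters_imp_circle_hom[OF assms(1,2)]] by simp
  moreover have "openin X {y. 0 < Re (c y)}"
    using openin_character_Re_pos[OF assms(2)] assms(1) by (simp add: topspace_topological_ab_group)
  ultimately obtain n where "V n \<subseteq> {y. 0 < Re (c y)}"
    using assms(3) by blast
  then have "c \<in> polar X (V n)"
    using assms(2) by (force simp: polar_around_def)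
  then show ?thesis ..
qed

lemma polar_chain_neighbourhood:
  assumes tg: "topological_ab_group X" and c0: "c0 \<in> characters X"
    and V: "decseq V" "\<And>U. openin X U \<Longrightarrow> 0 \<in> U \<Longrightarrow> \<exists>n. V n \<subseteq> U"
      "\<And>n. V n \<subseteq> {y. 0 < Re (c0 y)}"
    and T: "finite T"
    and S: "\<And>n. finite (S n)" "\<And>n. S n \<subseteq> V n"
      "\<And>n. polar_around X c0 T \<inter> polar X (\<Union>k<n. S k) \<inter> polar X (V n) \<inter> F = {}"
  obtains W where "openin (dual_group X) W" "c0 \<in> W" "W \<inter> F = {}"
proof
  define K where "K = insert 0 (\<Union>n. S n)"
  have "compactin X K"
    unfolding K_def using tg S(1,2) V(1,2)
    by (intro compactin_insert_UN_converging) (auto simp: topspace_topological_ab_group)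
  define W where "W = {f \<in> characters X. \<forall>y\<in>T. 0 < Re (f y * cnj (c0 y))}
      \<inter> {f \<in> characters X. \<forall>y\<in>K. 0 < Re (f y)}"
  show "openin (dual_group X) W"
    unfolding W_def using openin_dual_group_strict_polar_around[OF tg T]
      openin_dual_group_strict_polar[OF \<open>compactin X K\<close>] by (rule openin_Int)
  have hc0: "circle_hom c0"
    using characters_imp_circle_hom[OF tg c0] .
  have "0 < Re (c0 y)" if "y \<in> K" for y
    using that circle_hom_zero[OF hc0] S(2) V(3) by (fastforce simp: K_def)
  moreover have "Re (c0 y * cnj (c0 y)) = 1" for y
    using hc0 cmod_eq_1_mult_cnj by (simp add: circle_hom_def)
  ultimately show "c0 \<in> W"
    using c0 by (simp add: W_def)
  show "W \<inter> F = {}"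
  proof (rule ccontr)
    assume "W \<inter> F \<noteq> {}"
    then obtain f where f: "f \<in> W" "f \<in> F"
      by blast
    then obtain n where "f \<in> polar X (V n)"
      using character_in_polar_of_neighbourhood_base[OF tg _ V(2)] by (auto simp: W_def)
    moreover have "f \<in> polar_around X c0 T"
      using f(1) by (auto simp: W_def polar_around_def less_imp_le)
    moreover have "f \<in> polar X (\<Union>k<n. S k)"
      using f(1) by (auto simp: W_def K_def polar_around_def less_imp_le)
    ultimately show False
      using S(3)[of n] f(2) by blast
  qed
qed

lemma k_closed_complement_neighbourhood:
  assumes tg: "topological_ab_group X" and fc: "first_countable X"
    and kF: "\<And>K. compactin (dual_group X) K \<Longrightarrow> closedin (dual_group X) K \<Longrightarrow>
      closedin (dual_group X) (K \<inter> F)"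
    and c0: "c0 \<in> characters X" "c0 \<notin> F"
  obtains W where "openin (dual_group X) W" "c0 \<in> W" "W \<inter> F = {}"
proof -
  have "openin X {y. 0 < Re (c0 y)}"
    using openin_character_Re_pos[OF c0(1)] tg by (simp add: topspace_topological_ab_group)
  moreover have "0 \<in> {y. 0 < Re (c0 y)}"
    using circle_hom_zero[OF characters_imp_circle_hom[OF tg c0(1)]] by simp
  ultimately obtain V where V: "\<And>n. openin X (V n)" "\<And>n. 0 \<in> V n"
    "\<And>n. V n \<subseteq> {y. 0 < Re (c0 y)}" "decseq V" "\<And>U. openin X U \<Longrightarrow> 0 \<in> U \<Longrightarrow> \<exists>n. V n \<subseteq> U"
    using first_countable_decseq_neighbourhood_base[OF fc] by metis
  have PF: "closedin (dual_group X) (polar X (V n) \<inter> F)" "compactin (dual_group X) (polar X (V n) \<inter> F)"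
    for n
  proof -
    show "closedin (dual_group X) (polar X (V n) \<inter> F)"
      using compactin_polar[OF tg V(1,2)] closedin_polar_around[OF tg] by (rule kF)
    then show "compactin (dual_group X) (polar X (V n) \<inter> F)"
      by (rule closed_compactin[OF compactin_polar[OF tg V(1,2)] Int_lower1])
  qed
  have "(polar X (V 0) \<inter> F) \<inter> polar_around X c0 UNIV = {}"
    using c0(2) by (auto simp: polar_around_UNIV[OF tg c0(1)])
  then obtain T where "finite T" "(polar X (V 0) \<inter> F) \<inter> polar_around X c0 T = {}"
    using polar_around_finite_disjoint[OF tg PF(2)] by metis
  then have "polar_around X c0 T \<inter> polar X (V 0) \<inter> F = {}"
    by blast
  then obtain S where "\<And>n. finite (S n)" "\<And>n. S n \<subseteq> V n"
    "\<And>n. polar_around X c0 T \<inter> polar X (\<Union>k<n. S k) \<inter> polar X (V n) \<inter> F = {}"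
    by (rule polar_chain_exists[where V = V and F = F, OF tg PF(2,1) closedin_polar_around[OF tg]])
      blast
  then show ?thesis
    using polar_chain_neighbourhood[OF tg c0(1) V(4,5,3) \<open>finite T\<close>] that by metis
qed

lemma closedin_dual_group_if_k_closed:
  assumes tg: "topological_ab_group X" and fc: "first_countable X"
    and F: "F \<subseteq> characters X"
    and k: "\<And>K. compactin (dual_group X) K \<Longrightarrow> closedin (subtopology (dual_group X) K) (K \<inter> F)"
  shows "closedin (dual_group X) F"
proof -
  have kF: "closedin (dual_group X) (K \<inter> F)"
    if "compactin (dual_group X) K" "closedin (dual_group X) K" for K
    using closedin_trans_full[OF k[OF that(1)] that(2)] .
  have "\<exists>W. openin (dual_group X) W \<and> c0 \<in> W \<and> W \<subseteq> topspace (dual_group X) - F"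
    if c0: "c0 \<in> topspace (dual_group X) - F" for c0
  proof -
    obtain W where "openin (dual_group X) W" "c0 \<in> W" "W \<inter> F = {}"
      using k_closed_complement_neighbourhood[OF tg fc kF] c0 by (auto simp: topspace_dual_group)
    then show ?thesis
      using openin_subset by blast
  qed
  then have "openin (dual_group X) (topspace (dual_group X) - F)"
    by (subst openin_subopen) blast
  then show ?thesis
    using F by (simp add: closedin_def topspace_dual_group)
qed

theorem mainTheorem10:
  fixes X :: "'a::ab_group_add topology"
  assumes "topological_ab_group X"
    and "metrizable_space X"
  shows "Hausdorff_space (dual_group X) \<and> k_space (dual_group X)"
proof
  show "Hausdorff_space (dual_group X)"
    using assms(1) by (rule Hausdorff_space_dual_group)
  show "k_space (dual_group X)"
    unfolding k_space
    using closedin_dual_group_if_k_closed[OF assms(1) metrizable_imp_first_countable[OF assms(2)]]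
    by (simp add: topspace_dual_group)
qed

end
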